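(* Let $\mathcal A$ be an abelian category, let $M$ be an object and let $0\to F\to N\to C\to 0$ be a fully invariant short exact sequence in $\mathcal A$. Then: (1) $N$ is (strongly) $M$-$F$-split if and only if for every direct summand $M_1$ of $M$ and every direct summand $N_1$ of $N$, $N_1$ is (strongly) $M_1$-$(F\cap N_1)$-split. (2) $N$ is dual (strongly) $M$-$F$-split if and only if for every direct summand $M_1$ of $M$ and every direct summand $N_1$ of $N$, $N/N_1$ is dual (strongly) $M/M_1$-$((F+N_1)/N_1)$-split.
   Context: Convention: each statement containing parenthetical words holds in two versions: one obtained by deleting all parenthetical words and one obtained by keeping all of them. Let $\mathcal A$ be an abelian category. A morphism $s:X\to Y$ is a section if $ts=1_X$ for some $t$, and a retraction if $st=1_Y$ for some $t$. A monomorphism $i:K\to M$ is fully invariant if for every morphism $h:M\to M$ there is $\alpha:K\to K$ with $hi=i\alpha$; an epimorphism $d:M\to C$ is fully coinvariant if for every $h:M\to M$ there is $\beta:C\to C$ with $dh=\beta d$. A short exact sequence $0\to F\xrightarrow{i}N\xrightarrow{d}C\to 0$ is fully invariant if $i$ is fully invariant (equivalently $d$ is fully coinvariant). (For a direct summand $N_1$ of $N$, the inclusion $F\cap N_1\to N_1$ is fully invariant and $(F+N_1)/N_1$ is a fully invariant subobject of $N/N_1$, so the notions below apply.) For an object $M$ and a fully invariant short exact sequence $0\to F\xrightarrow{i}N\xrightarrow{d}C\to 0$: $N$ is (strongly) $M$-$F$-split if for every morphism $g:M\to N$, $\ker(dg)$ (equivalently the morphism $P\to M$ in the pullback of $i$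 along $g$) is a (fully invariant) section; $N$ is dual (strongly) $M$-$F$-split if for every morphism $g:N\to M$, $\mathrm{coker}(gi)$ (equivalently the morphism $M\to Q$ in the pushout of $d$ along $g$) is a (fully coinvariant) retraction. *)

theory Defs
  imports Main
begin

text \<open>Arrows carry domain and codomain; c_comp g f is the composite g after f.\<close>

record ('o, 'm) acat =
  c_ob   :: "'o set"
  c_ar   :: "'m set"
  c_dom  :: "'m \<Rightarrow> 'o"
  c_cod  :: "'m \<Rightarrow> 'o"
  c_comp :: "'m \<Rightarrow> 'm \<Rightarrow> 'm"
  c_id   :: "'o \<Rightarrow> 'm"
  c_add  :: "'m \<Rightarrow> 'm \<Rightarrow> 'm"
  c_neg  :: "'m \<Rightarrow> 'm"
  c_zero :: "'o \<Rightarrow> 'o \<Rightarrow> 'm"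

definition hom :: "('o, 'm) acat \<Rightarrow> 'o \<Rightarrow> 'o \<Rightarrow> 'm set" where
  "hom A X Y = {f \<in> c_ar A. c_dom A f = X \<and> c_cod A f = Y}"

definition is_category :: "('o, 'm) acat \<Rightarrow> bool" where
  "is_category A \<longleftrightarrow>
     (\<forall>f \<in> c_ar A. c_dom A f \<in> c_ob A \<and> c_cod A f \<in> c_ob A) \<and>
     (\<forall>X \<in> c_ob A. c_id A X \<in> hom A X X) \<and>
     (\<forall>X Y Z f g. f \<in> hom A X Y \<longrightarrow> g \<in> hom A Y Z \<longrightarrow> c_comp A g f \<in> hom A X Z) \<and>
     (\<forall>f \<in> c_ar A. c_comp A (c_id A (c_cod A f)) f = f \<and> c_comp A f (c_id A (c_dom A f)) = f) \<and>
     (\<forall>f g h. f \<in> c_ar A \<longrightarrow> g \<in> c_ar A \<longrightarrow> h \<in> c_ar A \<longrightarrow>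
        c_cod A f = c_dom A g \<longrightarrow> c_cod A g = c_dom A h \<longrightarrow>
        c_comp A h (c_comp A g f) = c_comp A (c_comp A h g) f)"

definition is_preadditive :: "('o, 'm) acat \<Rightarrow> bool" where
  "is_preadditive A \<longleftrightarrow> is_category A \<and>
     (\<forall>X \<in> c_ob A. \<forall>Y \<in> c_ob A. c_zero A X Y \<in> hom A X Y \<and>
        (\<forall>f \<in> hom A X Y. c_neg A f \<in> hom A X Y \<and>
            c_add A f (c_zero A X Y) = f \<and>
            c_add A f (c_neg A f) = c_zero A X Y \<and>
          (\<forall>g \<in> hom A X Y. c_add A f g \<in> hom A X Y \<and> c_add A f g = c_add A g f \<and>
            (\<forall>h \<in> hom A X Y. c_add A (c_add A f g) h = c_add A f (c_add A g h))))) \<and>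
     (\<forall>X Y Z f g h. f \<in> hom A X Y \<longrightarrow> g \<in> hom A X Y \<longrightarrow> h \<in> hom A Y Z \<longrightarrow>
        c_comp A h (c_add A f g) = c_add A (c_comp A h f) (c_comp A h g)) \<and>
     (\<forall>X Y Z f g k. f \<in> hom A Y Z \<longrightarrow> g \<in> hom A Y Z \<longrightarrow> k \<in> hom A X Y \<longrightarrow>
        c_comp A (c_add A f g) k = c_add A (c_comp A f k) (c_comp A g k))"

definition is_mono :: "('o, 'm) acat \<Rightarrow> 'm \<Rightarrow> bool" where
  "is_mono A m \<longleftrightarrow> m \<in> c_ar A \<and>
     (\<forall>g h. g \<in> c_ar A \<longrightarrow> h \<in> c_ar A \<longrightarrow> c_dom A g = c_dom A h \<longrightarrow>
        c_cod A g = c_dom A m \<longrightarrow> c_cod A h = c_dom A m \<longrightarrow>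
        c_comp A m g = c_comp A m h \<longrightarrow> g = h)"

definition is_epi :: "('o, 'm) acat \<Rightarrow> 'm \<Rightarrow> bool" where
  "is_epi A e \<longleftrightarrow> e \<in> c_ar A \<and>
     (\<forall>g h. g \<in> c_ar A \<longrightarrow> h \<in> c_ar A \<longrightarrow> c_cod A g = c_cod A h \<longrightarrow>
        c_dom A g = c_cod A e \<longrightarrow> c_dom A h = c_cod A e \<longrightarrow>
        c_comp A g e = c_comp A h e \<longrightarrow> g = h)"

definition is_kernel :: "('o, 'm) acat \<Rightarrow> 'm \<Rightarrow> 'm \<Rightarrow> bool" where
  "is_kernel A k f \<longleftrightarrow> f \<in> c_ar A \<and> k \<in> c_ar A \<and> c_cod A k = c_dom A f \<and>
     c_comp A f k = c_zero A (c_dom A k) (c_cod A f) \<and>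
     (\<forall>h \<in> c_ar A. c_cod A h = c_dom A f \<longrightarrow> c_comp A f h = c_zero A (c_dom A h) (c_cod A f) \<longrightarrow>
        (\<exists>!u. u \<in> hom A (c_dom A h) (c_dom A k) \<and> c_comp A k u = h))"

definition is_cokernel :: "('o, 'm) acat \<Rightarrow> 'm \<Rightarrow> 'm \<Rightarrow> bool" where
  "is_cokernel A c f \<longleftrightarrow> f \<in> c_ar A \<and> c \<in> c_ar A \<and> c_dom A c = c_cod A f \<and>
     c_comp A c f = c_zero A (c_dom A f) (c_cod A c) \<and>
     (\<forall>h \<in> c_ar A. c_dom A h = c_cod A f \<longrightarrow> c_comp A h f = c_zero A (c_dom A f) (c_cod A h) \<longrightarrow>
        (\<exists>!u. u \<in> hom A (c_cod A c) (c_cod A h) \<and> c_comp A u c = h))"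

definition is_pullback :: "('o, 'm) acat \<Rightarrow> 'm \<Rightarrow> 'm \<Rightarrow> 'm \<Rightarrow> 'm \<Rightarrow> bool" where
  "is_pullback A p1 p2 f g \<longleftrightarrow>
     p1 \<in> c_ar A \<and> p2 \<in> c_ar A \<and> f \<in> c_ar A \<and> g \<in> c_ar A \<and>
     c_dom A p1 = c_dom A p2 \<and> c_cod A p1 = c_dom A f \<and> c_cod A p2 = c_dom A g \<and>
     c_cod A f = c_cod A g \<and> c_comp A f p1 = c_comp A g p2 \<and>
     (\<forall>a \<in> c_ar A. \<forall>b \<in> c_ar A. c_dom A a = c_dom A b \<longrightarrow> c_cod A a = c_dom A f \<longrightarrow>
        c_cod A b = c_dom A g \<longrightarrow> c_comp A f a = c_comp A g b \<longrightarrow>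
        (\<exists>!u. u \<in> hom A (c_dom A a) (c_dom A p1) \<and> c_comp A p1 u = a \<and> c_comp A p2 u = b))"

definition abelian :: "('o, 'm) acat \<Rightarrow> bool" where
  "abelian A \<longleftrightarrow> is_preadditive A \<and>
     (\<exists>Z \<in> c_ob A. c_id A Z = c_zero A Z Z) \<and>
     (\<forall>X \<in> c_ob A. \<forall>Y \<in> c_ob A. \<exists>P p1 p2 e1 e2.
        p1 \<in> hom A P X \<and> p2 \<in> hom A P Y \<and> e1 \<in> hom A X P \<and> e2 \<in> hom A Y P \<and>
        c_comp A p1 e1 = c_id A X \<and> c_comp A p2 e2 = c_id A Y \<and>
        c_comp A p1 e2 = c_zero A Y X \<and> c_comp A p2 e1 = c_zero A X Y \<and>
        c_add A (c_comp A e1 p1) (c_comp A e2 p2) = c_id A P) \<and>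
     (\<forall>f \<in> c_ar A. \<exists>k. is_kernel A k f) \<and>
     (\<forall>f \<in> c_ar A. \<exists>c. is_cokernel A c f) \<and>
     (\<forall>m. is_mono A m \<longrightarrow> (\<exists>f. is_kernel A m f)) \<and>
     (\<forall>e. is_epi A e \<longrightarrow> (\<exists>f. is_cokernel A e f))"

definition is_section :: "('o, 'm) acat \<Rightarrow> 'm \<Rightarrow> bool" where
  "is_section A s \<longleftrightarrow> s \<in> c_ar A \<and>
     (\<exists>t \<in> hom A (c_cod A s) (c_dom A s). c_comp A t s = c_id A (c_dom A s))"

definition is_retraction :: "('o, 'm) acat \<Rightarrow> 'm \<Rightarrow> bool" where
  "is_retraction A s \<longleftrightarrow> s \<in> c_ar A \<and>
     (\<exists>t \<in> hom A (c_cod A s) (c_dom A s). c_comp A s t = c_id A (c_cod A s))"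

definition fully_invariant :: "('o, 'm) acat \<Rightarrow> 'm \<Rightarrow> bool" where
  "fully_invariant A i \<longleftrightarrow> is_mono A i \<and>
     (\<forall>h \<in> hom A (c_cod A i) (c_cod A i). \<exists>\<alpha> \<in> hom A (c_dom A i) (c_dom A i).
        c_comp A h i = c_comp A i \<alpha>)"

definition fully_coinvariant :: "('o, 'm) acat \<Rightarrow> 'm \<Rightarrow> bool" where
  "fully_coinvariant A d \<longleftrightarrow> is_epi A d \<and>
     (\<forall>h \<in> hom A (c_dom A d) (c_dom A d). \<exists>\<beta> \<in> hom A (c_cod A d) (c_cod A d).
        c_comp A d h = c_comp A \<beta> d)"

definition short_exact :: "('o, 'm) acat \<Rightarrow> 'm \<Rightarrow> 'm \<Rightarrow> bool" where
  "short_exact A i d \<longleftrightarrow> is_kernel A i d \<and> is_cokernel A d i"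

definition fi_short_exact :: "('o, 'm) acat \<Rightarrow> 'm \<Rightarrow> 'm \<Rightarrow> bool" where
  "fi_short_exact A i d \<longleftrightarrow> short_exact A i d \<and> fully_invariant A i"

text \<open>N = cod i = dom d is M-F-split w.r.t. the sequence 0 \<rightarrow> F --i--> N --d--> C \<rightarrow> 0.\<close>
definition MF_split :: "('o, 'm) acat \<Rightarrow> 'o \<Rightarrow> 'm \<Rightarrow> 'm \<Rightarrow> bool" where
  "MF_split A M i d \<longleftrightarrow>
     (\<forall>g \<in> hom A M (c_dom A d). \<forall>k. is_kernel A k (c_comp A d g) \<longrightarrow> is_section A k)"

definition strongly_MF_split :: "('o, 'm) acat \<Rightarrow> 'o \<Rightarrow> 'm \<Rightarrow> 'm \<Rightarrow> bool" where
  "strongly_MF_split A M i d \<longleftrightarrow>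
     (\<forall>g \<in> hom A M (c_dom A d). \<forall>k. is_kernel A k (c_comp A d g) \<longrightarrow>
        is_section A k \<and> fully_invariant A k)"

definition dual_MF_split :: "('o, 'm) acat \<Rightarrow> 'o \<Rightarrow> 'm \<Rightarrow> 'm \<Rightarrow> bool" where
  "dual_MF_split A M i d \<longleftrightarrow>
     (\<forall>g \<in> hom A (c_cod A i) M. \<forall>c. is_cokernel A c (c_comp A g i) \<longrightarrow> is_retraction A c)"

definition dual_strongly_MF_split :: "('o, 'm) acat \<Rightarrow> 'o \<Rightarrow> 'm \<Rightarrow> 'm \<Rightarrow> bool" where
  "dual_strongly_MF_split A M i d \<longleftrightarrow>
     (\<forall>g \<in> hom A (c_cod A i) M. \<forall>c. is_cokernel A c (c_comp A g i) \<longrightarrow>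
        is_retraction A c \<and> fully_coinvariant A c)"

text \<open>Right-hand side of part (1): for every direct summand M1 of M (given by a section
  s : M1 \<rightarrow> M) and every direct summand N1 of N (given by a section e : N1 \<rightarrow> N), with
  j : F \<inter> N1 \<rightarrow> N1 the pullback of i along e and d1 a cokernel of j, the predicate holds.\<close>
definition summand_cond :: "(('o, 'm) acat \<Rightarrow> 'o \<Rightarrow> 'm \<Rightarrow> 'm \<Rightarrow> bool) \<Rightarrow>
    ('o, 'm) acat \<Rightarrow> 'o \<Rightarrow> 'm \<Rightarrow> 'm \<Rightarrow> bool" where
  "summand_cond S A M i d \<longleftrightarrow>
     (\<forall>M1 s N1 e j' j d1.
        s \<in> hom A M1 M \<longrightarrow> is_section A s \<longrightarrow>
        e \<in> hom A N1 (c_cod A i) \<longrightarrow> is_section A e \<longrightarrow>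
        is_pullback A j' j i e \<longrightarrow> is_cokernel A d1 j \<longrightarrow>
        S A M1 j d1)"

text \<open>Right-hand side of part (2): with q_M : M \<rightarrow> M/M1 a cokernel of s, q : N \<rightarrow> N/N1 a cokernel
  of e, d' : N/N1 \<rightarrow> N/(F+N1) a cokernel of q i and i' : (F+N1)/N1 \<rightarrow> N/N1 a kernel of d',
  the predicate holds for the object M/M1 and the sequence (i', d').\<close>
definition quotient_cond :: "(('o, 'm) acat \<Rightarrow> 'o \<Rightarrow> 'm \<Rightarrow> 'm \<Rightarrow> bool) \<Rightarrow>
    ('o, 'm) acat \<Rightarrow> 'o \<Rightarrow> 'm \<Rightarrow> 'm \<Rightarrow> bool" where
  "quotient_cond S A M i d \<longleftrightarrow>
     (\<forall>M1 s qM N1 e q d' i'.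
        s \<in> hom A M1 M \<longrightarrow> is_section A s \<longrightarrow> is_cokernel A qM s \<longrightarrow>
        e \<in> hom A N1 (c_cod A i) \<longrightarrow> is_section A e \<longrightarrow> is_cokernel A q e \<longrightarrow>
        is_cokernel A d' (c_comp A q i) \<longrightarrow> is_kernel A i' d' \<longrightarrow>
        S A (c_cod A qM) i' d')"

end

theory Submission
  imports Defs
begin

text \<open>Let \<open>M\<^sub>1\<close> be a summand of \<open>M\<close> with retraction \<open>t\<close>, \<open>N\<^sub>1\<close> a summand of \<open>N\<close> with inclusion \<open>e\<close>,
  and \<open>g\<^sub>1 : M\<^sub>1 \<rightarrow> N\<^sub>1\<close>. A morphism into \<open>N\<^sub>1\<close> is killed by \<open>N\<^sub>1 \<rightarrow> N\<^sub>1/(F \<inter> N\<^sub>1)\<close> iff its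
  composite with \<open>e\<close> is killed by \<open>N \<rightarrow> N/F\<close> (the pullback property), so the kernel in the
  summand condition is the kernel of \<open>h = d e g\<^sub>1\<close>, while \<open>M\<close>-\<open>F\<close>-splitness speaks about the kernel of
  \<open>h t = d (e g\<^sub>1 t)\<close>. Since \<open>t\<close> is a retraction, \<open>ker h\<close> is a retract of \<open>ker (h t)\<close> compatible with
  the inclusions, and being a section or fully invariant passes to such retracts. The dual
  statement is proved dually, using that the image of \<open>F\<close> in \<open>N/N\<^sub>1\<close> has the same annihilators
  as \<open>F \<rightarrow> N/N\<^sub>1\<close>. The converse implications are the special cases \<open>M\<^sub>1 = M\<close>, \<open>N\<^sub>1 = N\<close>
  and \<open>M\<^sub>1 = N\<^sub>1 = 0\<close> respectively.\<close>

section \<open>Preadditive categories\<close>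

locale preadditive =
  fixes A :: "('o, 'm) acat"
  assumes preadditive: "is_preadditive A"
begin

abbreviation compose (infixr "\<cdot>" 55) where "g \<cdot> f \<equiv> c_comp A g f"
abbreviation zero_map ("\<zero>") where "\<zero> \<equiv> c_zero A"

lemma category: "is_category A"
  using preadditive unfolding is_preadditive_def by blast

lemma hom_iff: "f \<in> hom A X Y \<longleftrightarrow> f \<in> c_ar A \<and> c_dom A f = X \<and> c_cod A f = Y"
  unfolding hom_def by simp

lemma ar_hom: "f \<in> c_ar A \<Longrightarrow> f \<in> hom A (c_dom A f) (c_cod A f)"
  by (simp add: hom_iff)

lemma hom_ob: "f \<in> hom A X Y \<Longrightarrow> X \<in> c_ob A \<and> Y \<in> c_ob A"
  using category unfolding is_category_def hom_iff by blast

lemma comp_hom: "f \<in> hom A X Y \<Longrightarrow> g \<in> hom A Y Z \<Longrightarrow> g \<cdot> f \<in> hom A X Z"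
  using category unfolding is_category_def by blast

lemma id_hom: "X \<in> c_ob A \<Longrightarrow> c_id A X \<in> hom A X X"
  using category unfolding is_category_def by blast

lemma id_left: "f \<in> hom A X Y \<Longrightarrow> c_id A Y \<cdot> f = f"
  using category unfolding is_category_def hom_iff by blast

lemma id_right: "f \<in> hom A X Y \<Longrightarrow> f \<cdot> c_id A X = f"
  using category unfolding is_category_def hom_iff by blast

lemma comp_assoc:
  "f \<in> hom A X Y \<Longrightarrow> g \<in> hom A Y Z \<Longrightarrow> h \<in> hom A Z W \<Longrightarrow> h \<cdot> (g \<cdot> f) = (h \<cdot> g) \<cdot> f"
  using category unfolding is_category_def hom_iff by metis

lemma preadditive_hom_ax:
  "\<forall>X \<in> c_ob A. \<forall>Y \<in> c_ob A. \<zero> X Y \<in> hom A X Y \<and>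
     (\<forall>f \<in> hom A X Y. c_neg A f \<in> hom A X Y \<and> c_add A f (\<zero> X Y) = f \<and>
        c_add A f (c_neg A f) = \<zero> X Y \<and>
        (\<forall>g \<in> hom A X Y. c_add A f g \<in> hom A X Y \<and> c_add A f g = c_add A g f \<and>
          (\<forall>h \<in> hom A X Y. c_add A (c_add A f g) h = c_add A f (c_add A g h))))"
  using preadditive unfolding is_preadditive_def by (elim conjE) assumption

lemma hom_group:
  assumes f: "f \<in> hom A X Y"
  shows "c_neg A f \<in> hom A X Y" "c_add A f (\<zero> X Y) = f" "c_add A f (c_neg A f) = \<zero> X Y"
    "g \<in> hom A X Y \<Longrightarrow> c_add A f g \<in> hom A X Y"
    "g \<in> hom A X Y \<Longrightarrow> c_add A f g = c_add A g f"
    "g \<in> hom A X Y \<Longrightarrow> h \<in> hom A X Y \<Longrightarrow> c_add A (c_add A f g) h = c_add A f (c_add A g h)"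
  using preadditive_hom_ax f hom_ob[OF f] by blast+

lemma zero_hom: "X \<in> c_ob A \<Longrightarrow> Y \<in> c_ob A \<Longrightarrow> \<zero> X Y \<in> hom A X Y"
  using preadditive_hom_ax by blast

lemma comp_add_left:
  "f \<in> hom A X Y \<Longrightarrow> g \<in> hom A X Y \<Longrightarrow> h \<in> hom A Y Z \<Longrightarrow> h \<cdot> c_add A f g = c_add A (h \<cdot> f) (h \<cdot> g)"
  using preadditive unfolding is_preadditive_def by (elim conjE) blast

lemma comp_add_right:
  "f \<in> hom A Y Z \<Longrightarrow> g \<in> hom A Y Z \<Longrightarrow> k \<in> hom A X Y \<Longrightarrow> c_add A f g \<cdot> k = c_add A (f \<cdot> k) (g \<cdot> k)"
  using preadditive unfolding is_preadditive_def by (elim conjE) blast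

lemma add_idem_zero:
  assumes z: "z \<in> hom A X Y" and zz: "c_add A z z = z"
  shows "z = \<zero> X Y"
proof -
  have nz: "c_neg A z \<in> hom A X Y"
    using hom_group(1)[OF z] .
  have "\<zero> X Y = c_add A (c_add A z z) (c_neg A z)"
    using zz hom_group(3)[OF z] by simp
  also have "\<dots> = c_add A z (c_add A z (c_neg A z))"
    using hom_group(6)[OF z z nz] .
  also have "\<dots> = z"
    using hom_group(2,3)[OF z] by simp
  finally show ?thesis by simp
qed

lemma neg_unique:
  assumes f: "f \<in> hom A X Y" and g: "g \<in> hom A X Y" and fg: "c_add A f g = \<zero> X Y"
  shows "g = c_neg A f"
proof -
  have nf: "c_neg A f \<in> hom A X Y"
    using hom_group(1)[OF f] .
  have "g = c_add A g (c_add A f (c_neg A f))"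
    using hom_group(2,3)[OF f] hom_group(2)[OF g] by simp
  also have "\<dots> = c_add A (c_add A f g) (c_neg A f)"
    using hom_group(5,6)[OF g f] hom_group(6)[OF f g nf] nf by simp
  also have "\<dots> = c_neg A f"
    using fg hom_group(2,5)[OF nf] zero_hom hom_ob[OF f] by simp
  finally show ?thesis .
qed

lemma zero_comp:
  assumes f: "f \<in> hom A X Y" and Z: "Z \<in> c_ob A"
  shows "\<zero> Y Z \<cdot> f = \<zero> X Z"
proof -
  have z: "\<zero> Y Z \<in> hom A Y Z"
    using zero_hom hom_ob[OF f] Z by blast
  have "c_add A (\<zero> Y Z \<cdot> f) (\<zero> Y Z \<cdot> f) = \<zero> Y Z \<cdot> f"
    using comp_add_right[OF z z f] hom_group(2)[OF z] by simp
  then show ?thesis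
    using add_idem_zero comp_hom[OF f z] by blast
qed

lemma comp_zero:
  assumes g: "g \<in> hom A Y Z" and X: "X \<in> c_ob A"
  shows "g \<cdot> \<zero> X Y = \<zero> X Z"
proof -
  have z: "\<zero> X Y \<in> hom A X Y"
    using zero_hom hom_ob[OF g] X by blast
  have "c_add A (g \<cdot> \<zero> X Y) (g \<cdot> \<zero> X Y) = g \<cdot> \<zero> X Y"
    using comp_add_left[OF z z g] hom_group(2)[OF z] by simp
  then show ?thesis
    using add_idem_zero comp_hom[OF z g] by blast
qed

lemma neg_comp:
  assumes b: "b \<in> hom A Y Z" and f: "f \<in> hom A X Y"
  shows "c_neg A b \<cdot> f = c_neg A (b \<cdot> f)"
proof (rule neg_unique)
  show "c_add A (b \<cdot> f) (c_neg A b \<cdot> f) = \<zero> X Z"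
    using comp_add_right[OF b hom_group(1)[OF b] f] hom_group(3)[OF b] zero_comp[OF f] hom_ob[OF b]
    by simp
qed (use comp_hom b f hom_group(1)[OF b] in blast)+

lemma comp_neg:
  assumes f: "f \<in> hom A X Y" and b: "b \<in> hom A Y Z"
  shows "b \<cdot> c_neg A f = c_neg A (b \<cdot> f)"
proof (rule neg_unique)
  show "c_add A (b \<cdot> f) (b \<cdot> c_neg A f) = \<zero> X Z"
    using comp_add_left[OF f hom_group(1)[OF f] b] hom_group(3)[OF f] comp_zero[OF b] hom_ob[OF f]
    by simp
qed (use comp_hom b f hom_group(1)[OF f] in blast)+

lemma neg_zero:
  assumes "X \<in> c_ob A" "Y \<in> c_ob A"
  shows "c_neg A (\<zero> X Y) = \<zero> X Y"
  using neg_unique[OF zero_hom zero_hom] hom_group(2)[OF zero_hom] assms by metis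

lemma sectionI: "s \<in> hom A X Y \<Longrightarrow> t \<in> hom A Y X \<Longrightarrow> t \<cdot> s = c_id A X \<Longrightarrow> is_section A s"
  unfolding is_section_def hom_def by auto

lemma sectionE:
  assumes "is_section A s" "s \<in> hom A X Y"
  obtains t where "t \<in> hom A Y X" "t \<cdot> s = c_id A X"
  using assms unfolding is_section_def hom_def by auto

lemma retractionI: "r \<in> hom A X Y \<Longrightarrow> t \<in> hom A Y X \<Longrightarrow> r \<cdot> t = c_id A Y \<Longrightarrow> is_retraction A r"
  unfolding is_retraction_def hom_def by auto

lemma retractionE:
  assumes "is_retraction A r" "r \<in> hom A X Y"
  obtains t where "t \<in> hom A Y X" "r \<cdot> t = c_id A Y"
  using assms unfolding is_retraction_def hom_def by auto

lemma fully_invariantI: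
  assumes m: "is_mono A k" and k: "k \<in> hom A K M"
    and inv: "\<And>\<phi>. \<phi> \<in> hom A M M \<Longrightarrow> \<exists>\<alpha> \<in> hom A K K. \<phi> \<cdot> k = k \<cdot> \<alpha>"
  shows "fully_invariant A k"
proof -
  have "c_dom A k = K" "c_cod A k = M"
    using k by (simp_all add: hom_iff)
  then show ?thesis
    using m inv unfolding fully_invariant_def by simp
qed

lemma fully_invariantE:
  assumes fi: "fully_invariant A k" and k: "k \<in> hom A K M" and \<phi>: "\<phi> \<in> hom A M M"
  obtains \<alpha> where "\<alpha> \<in> hom A K K" "\<phi> \<cdot> k = k \<cdot> \<alpha>"
proof -
  have "c_dom A k = K" "c_cod A k = M"
    using k by (simp_all add: hom_iff)
  then have "\<forall>\<phi> \<in> hom A M M. \<exists>\<alpha> \<in> hom A K K. \<phi> \<cdot> k = k \<cdot> \<alpha>"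
    using fi unfolding fully_invariant_def by simp
  then show ?thesis
    using \<phi> that by blast
qed

lemma fully_coinvariantI:
  assumes e: "is_epi A c" and c: "c \<in> hom A M C"
    and inv: "\<And>\<phi>. \<phi> \<in> hom A M M \<Longrightarrow> \<exists>\<beta> \<in> hom A C C. c \<cdot> \<phi> = \<beta> \<cdot> c"
  shows "fully_coinvariant A c"
proof -
  have "c_dom A c = M" "c_cod A c = C"
    using c by (simp_all add: hom_iff)
  then show ?thesis
    using e inv unfolding fully_coinvariant_def by simp
qed

lemma fully_coinvariantE:
  assumes fc: "fully_coinvariant A c" and c: "c \<in> hom A M C" and \<phi>: "\<phi> \<in> hom A M M"
  obtains \<beta> where "\<beta> \<in> hom A C C" "c \<cdot> \<phi> = \<beta> \<cdot> c"
proof -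
  have "c_dom A c = M" "c_cod A c = C"
    using c by (simp_all add: hom_iff)
  then have "\<forall>\<phi> \<in> hom A M M. \<exists>\<beta> \<in> hom A C C. c \<cdot> \<phi> = \<beta> \<cdot> c"
    using fc unfolding fully_coinvariant_def by simp
  then show ?thesis
    using \<phi> that by blast
qed

subsection \<open>Kernels and cokernels\<close>

lemma kernel_arrow: "is_kernel A k f \<Longrightarrow> f \<in> c_ar A"
  by (simp add: is_kernel_def)

lemma kernel_hom:
  "is_kernel A k f \<Longrightarrow> f \<in> hom A X Y \<Longrightarrow> k \<in> hom A (c_dom A k) X"
  unfolding is_kernel_def hom_iff by simp

lemma kernel_comp_zero: "is_kernel A k f \<Longrightarrow> f \<cdot> k = \<zero> (c_dom A k) (c_cod A f)"
  unfolding is_kernel_def by blast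

lemma kernel_universal:
  assumes k: "is_kernel A k f" and h: "h \<in> hom A X (c_dom A f)" and fh: "f \<cdot> h = \<zero> X (c_cod A f)"
  shows "\<exists>!u. u \<in> hom A X (c_dom A k) \<and> k \<cdot> u = h"
proof -
  have "\<forall>h \<in> c_ar A. c_cod A h = c_dom A f \<longrightarrow> f \<cdot> h = \<zero> (c_dom A h) (c_cod A f) \<longrightarrow>
      (\<exists>!u. u \<in> hom A (c_dom A h) (c_dom A k) \<and> k \<cdot> u = h)"
    using k unfolding is_kernel_def by blast
  moreover have "h \<in> c_ar A" "c_cod A h = c_dom A f" and hd: "c_dom A h = X"
    using h by (simp_all add: hom_iff)
  ultimately show ?thesis
    using fh hd by (metis (no_types, lifting))
qed

lemma kernel_factor:
  "is_kernel A k f \<Longrightarrow> h \<in> hom A X (c_dom A f) \<Longrightarrow> f \<cdot> h = \<zero> X (c_cod A f) \<Longrightarrow>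
    \<exists>u \<in> hom A X (c_dom A k). k \<cdot> u = h"
  by (drule (2) kernel_universal) (erule ex1E, blast)

lemma kernel_cancel:
  assumes k: "is_kernel A k f" and u: "u \<in> hom A X (c_dom A k)" and v: "v \<in> hom A X (c_dom A k)"
    and kuv: "k \<cdot> u = k \<cdot> v"
  shows "u = v"
proof -
  have f: "f \<in> hom A (c_dom A f) (c_cod A f)"
    using ar_hom[OF kernel_arrow[OF k]] .
  have kh: "k \<in> hom A (c_dom A k) (c_dom A f)"
    using kernel_hom[OF k f] .
  have ku: "k \<cdot> u \<in> hom A X (c_dom A f)"
    using comp_hom[OF u kh] .
  have "f \<cdot> (k \<cdot> u) = \<zero> X (c_cod A f)"
    using comp_assoc[OF u kh f] kernel_comp_zero[OF k] zero_comp[OF u] hom_ob[OF f] by simp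
  then have "\<exists>!w. w \<in> hom A X (c_dom A k) \<and> k \<cdot> w = k \<cdot> u"
    using kernel_universal[OF k ku] by blast
  then show ?thesis
    using u v kuv by (metis (no_types, lifting))
qed

lemma kernel_mono:
  assumes k: "is_kernel A k f"
  shows "is_mono A k"
proof -
  have "g = h" if "g \<in> hom A X (c_dom A k)" "h \<in> hom A X (c_dom A k)" "k \<cdot> g = k \<cdot> h" for g h X
    using kernel_cancel[OF k that] .
  then show ?thesis
    using k unfolding is_mono_def is_kernel_def hom_iff by metis
qed

lemma cokernel_arrow: "is_cokernel A c f \<Longrightarrow> f \<in> c_ar A"
  by (simp add: is_cokernel_def)

lemma cokernel_hom:
  "is_cokernel A c f \<Longrightarrow> f \<in> hom A X Y \<Longrightarrow> c \<in> hom A Y (c_cod A c)"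
  unfolding is_cokernel_def hom_iff by simp

lemma cokernel_comp_zero: "is_cokernel A c f \<Longrightarrow> c \<cdot> f = \<zero> (c_dom A f) (c_cod A c)"
  unfolding is_cokernel_def by blast

lemma cokernel_universal:
  assumes c: "is_cokernel A c f" and h: "h \<in> hom A (c_cod A f) X" and hf: "h \<cdot> f = \<zero> (c_dom A f) X"
  shows "\<exists>!u. u \<in> hom A (c_cod A c) X \<and> u \<cdot> c = h"
proof -
  have "\<forall>h \<in> c_ar A. c_dom A h = c_cod A f \<longrightarrow> h \<cdot> f = \<zero> (c_dom A f) (c_cod A h) \<longrightarrow>
      (\<exists>!u. u \<in> hom A (c_cod A c) (c_cod A h) \<and> u \<cdot> c = h)"
    using c unfolding is_cokernel_def by blast
  moreover have "h \<in> c_ar A" "c_dom A h = c_cod A f" and hc: "c_cod A h = X"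
    using h by (simp_all add: hom_iff)
  ultimately show ?thesis
    using hf hc by (metis (no_types, lifting))
qed

lemma cokernel_factor:
  "is_cokernel A c f \<Longrightarrow> h \<in> hom A (c_cod A f) X \<Longrightarrow> h \<cdot> f = \<zero> (c_dom A f) X \<Longrightarrow>
    \<exists>u \<in> hom A (c_cod A c) X. u \<cdot> c = h"
  by (drule (2) cokernel_universal) (erule ex1E, blast)

lemma cokernel_cancel:
  assumes c: "is_cokernel A c f" and u: "u \<in> hom A (c_cod A c) X" and v: "v \<in> hom A (c_cod A c) X"
    and uvc: "u \<cdot> c = v \<cdot> c"
  shows "u = v"
proof -
  have f: "f \<in> hom A (c_dom A f) (c_cod A f)"
    using ar_hom[OF cokernel_arrow[OF c]] .
  have ch: "c \<in> hom A (c_cod A f) (c_cod A c)"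
    using cokernel_hom[OF c f] .
  have uc: "u \<cdot> c \<in> hom A (c_cod A f) X"
    using comp_hom[OF ch u] .
  have "(u \<cdot> c) \<cdot> f = \<zero> (c_dom A f) X"
    using comp_assoc[OF f ch u] cokernel_comp_zero[OF c] comp_zero[OF u] hom_ob[OF f] by simp
  then have "\<exists>!w. w \<in> hom A (c_cod A c) X \<and> w \<cdot> c = u \<cdot> c"
    using cokernel_universal[OF c uc] by blast
  then show ?thesis
    using u v uvc by (metis (no_types, lifting))
qed

lemma cokernel_epi:
  assumes c: "is_cokernel A c f"
  shows "is_epi A c"
proof -
  have "g = h" if "g \<in> hom A (c_cod A c) X" "h \<in> hom A (c_cod A c) X" "g \<cdot> c = h \<cdot> c" for g h X
    using cokernel_cancel[OF c that] .
  then show ?thesis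
    using c unfolding is_epi_def is_cokernel_def hom_iff by metis
qed

lemma kernel_annihilates_iff:
  assumes k: "is_kernel A k f" and y: "y \<in> hom A Z (c_dom A f)"
  shows "f \<cdot> y = \<zero> Z (c_cod A f) \<longleftrightarrow> (\<exists>u \<in> hom A Z (c_dom A k). y = k \<cdot> u)"
proof
  assume "f \<cdot> y = \<zero> Z (c_cod A f)"
  then show "\<exists>u \<in> hom A Z (c_dom A k). y = k \<cdot> u"
    using kernel_factor[OF k y] by metis
next
  assume "\<exists>u \<in> hom A Z (c_dom A k). y = k \<cdot> u"
  then obtain u where u: "u \<in> hom A Z (c_dom A k)" and yku: "y = k \<cdot> u" ..
  have f: "f \<in> hom A (c_dom A f) (c_cod A f)"
    using ar_hom[OF kernel_arrow[OF k]] .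
  show "f \<cdot> y = \<zero> Z (c_cod A f)"
    using yku comp_assoc[OF u kernel_hom[OF k f] f] kernel_comp_zero[OF k] zero_comp[OF u] hom_ob[OF f]
    by simp
qed

lemma cokernel_annihilates_iff:
  assumes c: "is_cokernel A c f" and y: "y \<in> hom A (c_cod A f) Z"
  shows "y \<cdot> f = \<zero> (c_dom A f) Z \<longleftrightarrow> (\<exists>w \<in> hom A (c_cod A c) Z. y = w \<cdot> c)"
proof
  assume "y \<cdot> f = \<zero> (c_dom A f) Z"
  then show "\<exists>w \<in> hom A (c_cod A c) Z. y = w \<cdot> c"
    using cokernel_factor[OF c y] by metis
next
  assume "\<exists>w \<in> hom A (c_cod A c) Z. y = w \<cdot> c"
  then obtain w where w: "w \<in> hom A (c_cod A c) Z" and ywc: "y = w \<cdot> c" ..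
  have f: "f \<in> hom A (c_dom A f) (c_cod A f)"
    using ar_hom[OF cokernel_arrow[OF c]] .
  show "y \<cdot> f = \<zero> (c_dom A f) Z"
    using ywc comp_assoc[OF f cokernel_hom[OF c f] w, symmetric] cokernel_comp_zero[OF c]
      comp_zero[OF w] hom_ob[OF f] by simp
qed

lemma kernel_of_same_annihilators:
  assumes k: "is_kernel A k f" and f: "f \<in> hom A X Y" and f': "f' \<in> hom A X Y'"
    and ann: "\<And>Z y. y \<in> hom A Z X \<Longrightarrow> f \<cdot> y = \<zero> Z Y \<longleftrightarrow> f' \<cdot> y = \<zero> Z Y'"
  shows "is_kernel A k f'"
proof -
  have kh: "k \<in> hom A (c_dom A k) X"
    using kernel_hom[OF k f] .
  have "f' \<cdot> k = \<zero> (c_dom A k) Y'"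
    using ann[OF kh] kernel_comp_zero[OF k] f by (simp add: hom_iff)
  moreover have "\<exists>!u. u \<in> hom A (c_dom A h) (c_dom A k) \<and> k \<cdot> u = h"
    if "h \<in> c_ar A" "c_cod A h = X" "f' \<cdot> h = \<zero> (c_dom A h) Y'" for h
  proof -
    have h: "h \<in> hom A (c_dom A h) X"
      using that by (simp add: hom_iff)
    then show ?thesis
      using kernel_universal[OF k] ann[OF h] that f by (simp add: hom_iff)
  qed
  ultimately show ?thesis
    using kh f f' unfolding is_kernel_def hom_iff by auto
qed

lemma cokernel_of_same_annihilators:
  assumes c: "is_cokernel A c f" and f: "f \<in> hom A X Y" and f': "f' \<in> hom A X' Y"
    and ann: "\<And>Z y. y \<in> hom A Y Z \<Longrightarrow> y \<cdot> f = \<zero> X Z \<longleftrightarrow> y \<cdot> f' = \<zero> X' Z"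
  shows "is_cokernel A c f'"
proof -
  have ch: "c \<in> hom A Y (c_cod A c)"
    using cokernel_hom[OF c f] .
  have "c \<cdot> f' = \<zero> X' (c_cod A c)"
    using ann[OF ch] cokernel_comp_zero[OF c] f by (simp add: hom_iff)
  moreover have "\<exists>!u. u \<in> hom A (c_cod A c) (c_cod A h) \<and> u \<cdot> c = h"
    if "h \<in> c_ar A" "c_dom A h = Y" "h \<cdot> f' = \<zero> X' (c_cod A h)" for h
  proof -
    have h: "h \<in> hom A Y (c_cod A h)"
      using that by (simp add: hom_iff)
    then show ?thesis
      using cokernel_universal[OF c] ann[OF h] that f by (simp add: hom_iff)
  qed
  ultimately show ?thesis
    using ch f f' unfolding is_cokernel_def hom_iff by auto
qed

lemma id_cokernel_of_zero:
  assumes Z: "Z \<in> c_ob A" and X: "X \<in> c_ob A"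
  shows "is_cokernel A (c_id A X) (\<zero> Z X)"
proof -
  have z: "\<zero> Z X \<in> hom A Z X"
    using zero_hom[OF Z X] .
  have iX: "c_id A X \<in> hom A X X"
    using id_hom[OF X] .
  have univ: "\<exists>!u. u \<in> hom A X (c_cod A h) \<and> u \<cdot> c_id A X = h"
    if "h \<in> c_ar A" "c_dom A h = X" for h
  proof -
    have h: "h \<in> hom A X (c_cod A h)"
      using that by (simp add: hom_iff)
    show ?thesis
    proof (rule ex1I[of _ h])
      show "h \<in> hom A X (c_cod A h) \<and> h \<cdot> c_id A X = h"
        using h id_right[OF h] by simp
    next
      fix u
      assume "u \<in> hom A X (c_cod A h) \<and> u \<cdot> c_id A X = h"
      then show "u = h"
        using id_right[of u X "c_cod A h"] by simp
    qed
  qed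
  show ?thesis
    unfolding is_cokernel_def
    using z iX id_left[OF z] univ by (simp add: hom_iff)
qed

lemma pullback_homs:
  assumes "is_pullback A p1 p2 f g"
  shows "p1 \<in> hom A (c_dom A p1) (c_dom A f)" "p2 \<in> hom A (c_dom A p1) (c_dom A g)"
    "f \<in> hom A (c_dom A f) (c_cod A f)" "g \<in> hom A (c_dom A g) (c_cod A f)" "f \<cdot> p1 = g \<cdot> p2"
  using assms unfolding is_pullback_def hom_iff by auto

lemma pullback_universal:
  assumes pb: "is_pullback A p1 p2 f g"
    and a: "a \<in> hom A X (c_dom A f)" and b: "b \<in> hom A X (c_dom A g)" and ab: "f \<cdot> a = g \<cdot> b"
  shows "\<exists>!u. u \<in> hom A X (c_dom A p1) \<and> p1 \<cdot> u = a \<and> p2 \<cdot> u = b"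
proof -
  have "\<forall>a \<in> c_ar A. \<forall>b \<in> c_ar A. c_dom A a = c_dom A b \<longrightarrow> c_cod A a = c_dom A f \<longrightarrow>
      c_cod A b = c_dom A g \<longrightarrow> f \<cdot> a = g \<cdot> b \<longrightarrow>
      (\<exists>!u. u \<in> hom A (c_dom A a) (c_dom A p1) \<and> p1 \<cdot> u = a \<and> p2 \<cdot> u = b)"
    using pb unfolding is_pullback_def by blast
  moreover have "a \<in> c_ar A" "b \<in> c_ar A" "c_dom A a = c_dom A b" "c_cod A a = c_dom A f"
      "c_cod A b = c_dom A g" and da: "c_dom A a = X"
    using a b by (simp_all add: hom_iff)
  ultimately show ?thesis
    using ab da by (metis (no_types, lifting))
qed

lemma pullback_mono:
  assumes pb: "is_pullback A j' j i e" and i: "is_mono A i"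
  shows "is_mono A j"
proof -
  note H = pullback_homs[OF pb]
  have "g = h" if g: "g \<in> hom A X (c_dom A j')" and h: "h \<in> hom A X (c_dom A j')" and jgh: "j \<cdot> g = j \<cdot> h"
    for g h X
  proof -
    have "i \<cdot> (j' \<cdot> g) = i \<cdot> (j' \<cdot> h)"
      using comp_assoc[OF g H(1,3)] comp_assoc[OF g H(2,4)] comp_assoc[OF h H(1,3)]
        comp_assoc[OF h H(2,4)] H(5) jgh by simp
    then have "j' \<cdot> g = j' \<cdot> h"
      using i comp_hom[OF g H(1)] comp_hom[OF h H(1)] unfolding is_mono_def hom_iff by metis
    moreover have "i \<cdot> (j' \<cdot> g) = e \<cdot> (j \<cdot> g)"
      using comp_assoc[OF g H(1,3)] comp_assoc[OF g H(2,4)] H(5) by simp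
    ultimately show ?thesis
      using pullback_universal[OF pb comp_hom[OF g H(1)] comp_hom[OF g H(2)]] g h jgh
      by (metis (no_types, lifting))
  qed
  then show ?thesis
    using H(2) unfolding is_mono_def hom_iff by metis
qed

lemma id_pullback:
  assumes i: "i \<in> hom A F N"
  shows "is_pullback A (c_id A F) i i (c_id A N)"
proof -
  have F: "F \<in> c_ob A" and N: "N \<in> c_ob A"
    using hom_ob[OF i] by auto
  have iF: "c_id A F \<in> hom A F F" and iN: "c_id A N \<in> hom A N N"
    using id_hom F N by auto
  have univ: "\<exists>!u. u \<in> hom A (c_dom A a) F \<and> c_id A F \<cdot> u = a \<and> i \<cdot> u = b"
    if "a \<in> c_ar A" "b \<in> c_ar A" "c_dom A a = c_dom A b" "c_cod A a = F" "c_cod A b = N"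
      and iab: "i \<cdot> a = c_id A N \<cdot> b" for a b
  proof -
    have a: "a \<in> hom A (c_dom A a) F" and b: "b \<in> hom A (c_dom A a) N"
      using that by (simp_all add: hom_iff)
    show ?thesis
    proof (rule ex1I[of _ a])
      show "a \<in> hom A (c_dom A a) F \<and> c_id A F \<cdot> a = a \<and> i \<cdot> a = b"
        using a id_left[OF a] id_left[OF b] iab by simp
    next
      fix u
      assume "u \<in> hom A (c_dom A a) F \<and> c_id A F \<cdot> u = a \<and> i \<cdot> u = b"
      then show "u = a"
        using id_left[of u "c_dom A a" F] by simp
    qed
  qed
  show ?thesis
    unfolding is_pullback_def
    using i iF iN id_left[OF i] id_right[OF i] univ by (simp add: hom_iff)
qed

subsection \<open>Direct summands\<close>

lemma cokernel_of_section_splits: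
  assumes s: "s \<in> hom A M1 M" and sec: "is_section A s" and q: "is_cokernel A q s"
  obtains r where "r \<in> hom A (c_cod A q) M" "q \<cdot> r = c_id A (c_cod A q)"
proof -
  define Q where "Q = c_cod A q"
  obtain t where t: "t \<in> hom A M M1" and ts: "t \<cdot> s = c_id A M1"
    using sectionE[OF sec s] .
  have qh: "q \<in> hom A M Q"
    unfolding Q_def using cokernel_hom[OF q s] .
  have M: "M \<in> c_ob A" and Q: "Q \<in> c_ob A"
    using hom_ob[OF qh] by auto
  have st: "s \<cdot> t \<in> hom A M M" and nst: "c_neg A (s \<cdot> t) \<in> hom A M M" and iM: "c_id A M \<in> hom A M M"
    using comp_hom[OF t s] hom_group(1) id_hom[OF M] by blast+
  \<comment> \<open>\<open>1 - s t\<close> kills \<open>s\<close>, so it factors as \<open>r q\<close>, and then \<open>q r q = q\<close>\<close>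
  define x where "x = c_add A (c_id A M) (c_neg A (s \<cdot> t))"
  have x: "x \<in> hom A M M"
    unfolding x_def using hom_group(4)[OF iM nst] .
  have "x \<cdot> s = c_add A s (c_neg A (s \<cdot> (t \<cdot> s)))"
    unfolding x_def using comp_add_right[OF iM nst s] id_left[OF s] neg_comp[OF st s] comp_assoc[OF s t s]
    by simp
  also have "\<dots> = \<zero> M1 M"
    using ts id_right[OF s] hom_group(3)[OF s] by simp
  finally have "\<exists>r \<in> hom A Q M. x = r \<cdot> q"
    unfolding Q_def using cokernel_annihilates_iff[OF q, of x M] x s by (simp add: hom_iff)
  then obtain r where r: "r \<in> hom A Q M" and xrq: "x = r \<cdot> q" ..
  have qs: "q \<cdot> s = \<zero> M1 Q"
    using cokernel_comp_zero[OF q] s unfolding Q_def by (simp add: hom_iff)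
  have "(q \<cdot> r) \<cdot> q = q \<cdot> x"
    using comp_assoc[OF qh r qh] xrq by simp
  also have "\<dots> = c_add A q (c_neg A ((q \<cdot> s) \<cdot> t))"
    unfolding x_def using comp_add_left[OF iM nst qh] id_right[OF qh] comp_neg[OF st qh] comp_assoc[OF t s qh]
    by simp
  also have "\<dots> = c_id A Q \<cdot> q"
    using qs zero_comp[OF t Q] neg_zero[OF M Q] hom_group(2)[OF qh] id_left[OF qh] by simp
  finally have "q \<cdot> r = c_id A Q"
    using cokernel_cancel[OF q] comp_hom[OF r qh] id_hom[OF Q] unfolding Q_def by blast
  then show ?thesis
    using that r unfolding Q_def by blast
qed

lemma id_section: "X \<in> c_ob A \<Longrightarrow> is_section A (c_id A X)"
  using sectionI id_hom id_left by metis

lemma zero_section: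
  assumes Z: "Z \<in> c_ob A" "c_id A Z = \<zero> Z Z" and X: "X \<in> c_ob A"
  shows "is_section A (\<zero> Z X)"
  using sectionI[OF zero_hom[OF Z(1) X] zero_hom[OF X Z(1)]] zero_comp[OF zero_hom[OF Z(1) X] Z(1)] Z(2)
  by simp

lemma kernel_precomp_retraction_compare:
  assumes s: "s \<in> hom A M1 M" and t: "t \<in> hom A M M1" and ts: "t \<cdot> s = c_id A M1"
    and h: "h \<in> hom A M1 Z"
    and k: "is_kernel A k (h \<cdot> t)" and k1: "is_kernel A k1 h"
  obtains u v where "u \<in> hom A (c_dom A k1) (c_dom A k)" "v \<in> hom A (c_dom A k) (c_dom A k1)"
    "k \<cdot> u = s \<cdot> k1" "k1 \<cdot> v = t \<cdot> k" "v \<cdot> u = c_id A (c_dom A k1)"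
proof -
  define K K1 where "K = c_dom A k" and "K1 = c_dom A k1"
  have ht: "h \<cdot> t \<in> hom A M Z"
    using comp_hom[OF t h] .
  have kh: "k \<in> hom A K M" and k1h: "k1 \<in> hom A K1 M1"
    unfolding K_def K1_def using kernel_hom[OF k ht] kernel_hom[OF k1 h] .
  have Z: "Z \<in> c_ob A" and K1: "K1 \<in> c_ob A"
    using hom_ob h k1h by blast+
  have tsk1: "t \<cdot> (s \<cdot> k1) = k1"
    using comp_assoc[OF k1h s t] ts id_left[OF k1h] by simp
  have dht: "c_dom A (h \<cdot> t) = M" "c_cod A (h \<cdot> t) = Z"
    using ht by (simp_all add: hom_iff)
  have "(h \<cdot> t) \<cdot> (s \<cdot> k1) = \<zero> K1 Z"
    using comp_assoc[OF comp_hom[OF k1h s] t h] tsk1 kernel_comp_zero[OF k1] h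
    unfolding K1_def hom_iff by simp
  then have "\<exists>u \<in> hom A K1 K. k \<cdot> u = s \<cdot> k1"
    unfolding K_def by (intro kernel_factor[OF k]) (use comp_hom[OF k1h s] dht in simp_all)
  then obtain u where u: "u \<in> hom A K1 K" and ku: "k \<cdot> u = s \<cdot> k1" ..
  have "h \<cdot> (t \<cdot> k) = \<zero> K Z"
    using comp_assoc[OF kh t h] kernel_comp_zero[OF k] dht unfolding K_def by simp
  then have "\<exists>v \<in> hom A K K1. k1 \<cdot> v = t \<cdot> k"
    unfolding K1_def by (intro kernel_factor[OF k1]) (use comp_hom[OF kh t] h in \<open>simp_all add: hom_iff\<close>)
  then obtain v where v: "v \<in> hom A K K1" and k1v: "k1 \<cdot> v = t \<cdot> k" ..
  have "k1 \<cdot> (v \<cdot> u) = t \<cdot> (k \<cdot> u)"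
    using comp_assoc[OF u v k1h] comp_assoc[OF u kh t] k1v by simp
  also have "\<dots> = k1 \<cdot> c_id A K1"
    using ku tsk1 id_right[OF k1h] by simp
  finally have "v \<cdot> u = c_id A K1"
    using kernel_cancel[OF k1] comp_hom[OF u v] id_hom[OF K1] unfolding K1_def by blast
  then show ?thesis
    using that u v ku k1v unfolding K_def K1_def by blast
qed

lemma kernel_precomp_retraction_section:
  assumes s: "s \<in> hom A M1 M" and t: "t \<in> hom A M M1" and ts: "t \<cdot> s = c_id A M1"
    and h: "h \<in> hom A M1 Z"
    and k: "is_kernel A k (h \<cdot> t)" and k1: "is_kernel A k1 h" and sec: "is_section A k"
  shows "is_section A k1"
proof -
  obtain u v where u: "u \<in> hom A (c_dom A k1) (c_dom A k)" and v: "v \<in> hom A (c_dom A k) (c_dom A k1)"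
    and ku: "k \<cdot> u = s \<cdot> k1" and vu: "v \<cdot> u = c_id A (c_dom A k1)"
    using kernel_precomp_retraction_compare[OF s t ts h k k1] by blast
  have kh: "k \<in> hom A (c_dom A k) M" and k1h: "k1 \<in> hom A (c_dom A k1) M1"
    using kernel_hom[OF k comp_hom[OF t h]] kernel_hom[OF k1 h] .
  obtain r where r: "r \<in> hom A M (c_dom A k)" and rk: "r \<cdot> k = c_id A (c_dom A k)"
    using sectionE[OF sec kh] .
  have rs: "r \<cdot> s \<in> hom A M1 (c_dom A k)"
    using comp_hom[OF s r] .
  have "(v \<cdot> (r \<cdot> s)) \<cdot> k1 = v \<cdot> ((r \<cdot> k) \<cdot> u)"
    using comp_assoc[OF k1h rs v] comp_assoc[OF k1h s r] comp_assoc[OF u kh r] ku by simp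
  also have "\<dots> = c_id A (c_dom A k1)"
    using rk id_left[OF u] vu by simp
  finally show ?thesis
    using sectionI[OF k1h comp_hom[OF rs v]] by blast
qed

lemma kernel_precomp_retraction_fully_invariant:
  assumes s: "s \<in> hom A M1 M" and t: "t \<in> hom A M M1" and ts: "t \<cdot> s = c_id A M1"
    and h: "h \<in> hom A M1 Z"
    and k: "is_kernel A k (h \<cdot> t)" and k1: "is_kernel A k1 h" and fi: "fully_invariant A k"
  shows "fully_invariant A k1"
proof -
  obtain u v where u: "u \<in> hom A (c_dom A k1) (c_dom A k)" and v: "v \<in> hom A (c_dom A k) (c_dom A k1)"
    and ku: "k \<cdot> u = s \<cdot> k1" and k1v: "k1 \<cdot> v = t \<cdot> k"
    using kernel_precomp_retraction_compare[OF s t ts h k k1] by blast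
  have kh: "k \<in> hom A (c_dom A k) M" and k1h: "k1 \<in> hom A (c_dom A k1) M1"
    using kernel_hom[OF k comp_hom[OF t h]] kernel_hom[OF k1 h] .
  have tsk1: "t \<cdot> (s \<cdot> k1) = k1"
    using comp_assoc[OF k1h s t] ts id_left[OF k1h] by simp
  have "\<exists>\<beta> \<in> hom A (c_dom A k1) (c_dom A k1). \<phi> \<cdot> k1 = k1 \<cdot> \<beta>" if \<phi>: "\<phi> \<in> hom A M1 M1" for \<phi>
  proof -
    define \<psi> where "\<psi> = s \<cdot> (\<phi> \<cdot> t)"
    have \<phi>t: "\<phi> \<cdot> t \<in> hom A M M1"
      using comp_hom[OF t \<phi>] .
    have \<psi>: "\<psi> \<in> hom A M M"
      unfolding \<psi>_def using comp_hom[OF \<phi>t s] .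
    obtain \<alpha> where \<alpha>: "\<alpha> \<in> hom A (c_dom A k) (c_dom A k)" and k\<alpha>: "\<psi> \<cdot> k = k \<cdot> \<alpha>"
      using fully_invariantE[OF fi kh \<psi>] .
    have \<psi>sk1: "\<psi> \<cdot> (s \<cdot> k1) = s \<cdot> (\<phi> \<cdot> k1)"
      unfolding \<psi>_def
      using comp_assoc[OF comp_hom[OF k1h s] \<phi>t s] comp_assoc[OF comp_hom[OF k1h s] t \<phi>] tsk1
      by simp
    have "k1 \<cdot> (v \<cdot> (\<alpha> \<cdot> u)) = t \<cdot> (k \<cdot> (\<alpha> \<cdot> u))"
      using comp_assoc[OF comp_hom[OF u \<alpha>] v k1h] comp_assoc[OF comp_hom[OF u \<alpha>] kh t] k1v
      by simp
    also have "\<dots> = t \<cdot> (\<psi> \<cdot> (s \<cdot> k1))"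
      using comp_assoc[OF u \<alpha> kh] comp_assoc[OF u kh \<psi>] k\<alpha> ku by simp
    also have "\<dots> = \<phi> \<cdot> k1"
      using \<psi>sk1 comp_assoc[OF comp_hom[OF k1h \<phi>] s t] ts id_left[OF comp_hom[OF k1h \<phi>]] by simp
    finally show ?thesis
      using comp_hom[OF comp_hom[OF u \<alpha>] v] by metis
  qed
  then show ?thesis
    using fully_invariantI[OF kernel_mono[OF k1] k1h] by blast
qed

lemma cokernel_postcomp_section_compare:
  assumes q: "q \<in> hom A M Q" and s: "s \<in> hom A Q M" and qs: "q \<cdot> s = c_id A Q"
    and h: "h \<in> hom A Z Q"
    and c: "is_cokernel A c (s \<cdot> h)" and c1: "is_cokernel A c1 h"
  obtains u v where "u \<in> hom A (c_cod A c) (c_cod A c1)" "v \<in> hom A (c_cod A c1) (c_cod A c)"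
    "u \<cdot> c = c1 \<cdot> q" "v \<cdot> c1 = c \<cdot> s" "u \<cdot> v = c_id A (c_cod A c1)"
proof -
  define C C1 where "C = c_cod A c" and "C1 = c_cod A c1"
  have sh: "s \<cdot> h \<in> hom A Z M"
    using comp_hom[OF h s] .
  have ch: "c \<in> hom A M C" and c1h: "c1 \<in> hom A Q C1"
    unfolding C_def C1_def using cokernel_hom[OF c sh] cokernel_hom[OF c1 h] .
  have Z: "Z \<in> c_ob A" and C1: "C1 \<in> c_ob A"
    using hom_ob h c1h by blast+
  have c1qs: "(c1 \<cdot> q) \<cdot> s = c1"
    using comp_assoc[OF s q c1h] qs id_right[OF c1h] by simp
  have dsh: "c_dom A (s \<cdot> h) = Z" "c_cod A (s \<cdot> h) = M"
    using sh by (simp_all add: hom_iff)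
  have "(c1 \<cdot> q) \<cdot> (s \<cdot> h) = \<zero> Z C1"
    using comp_assoc[OF h s comp_hom[OF q c1h]] c1qs cokernel_comp_zero[OF c1] h
    unfolding C1_def hom_iff by simp
  then have "\<exists>u \<in> hom A C C1. u \<cdot> c = c1 \<cdot> q"
    unfolding C_def by (intro cokernel_factor[OF c]) (use comp_hom[OF q c1h] dsh in simp_all)
  then obtain u where u: "u \<in> hom A C C1" and uc: "u \<cdot> c = c1 \<cdot> q" ..
  have "(c \<cdot> s) \<cdot> h = \<zero> Z C"
    using comp_assoc[OF h s ch] cokernel_comp_zero[OF c] dsh unfolding C_def by simp
  then have "\<exists>v \<in> hom A C1 C. v \<cdot> c1 = c \<cdot> s"
    unfolding C1_def by (intro cokernel_factor[OF c1]) (use comp_hom[OF s ch] h in \<open>simp_all add: hom_iff\<close>)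
  then obtain v where v: "v \<in> hom A C1 C" and vc1: "v \<cdot> c1 = c \<cdot> s" ..
  have "(u \<cdot> v) \<cdot> c1 = (u \<cdot> c) \<cdot> s"
    using comp_assoc[OF c1h v u] comp_assoc[OF s ch u] vc1 by simp
  also have "\<dots> = c_id A C1 \<cdot> c1"
    using uc c1qs id_left[OF c1h] by simp
  finally have "u \<cdot> v = c_id A C1"
    using cokernel_cancel[OF c1] comp_hom[OF v u] id_hom[OF C1] unfolding C1_def by blast
  then show ?thesis
    using that u v uc vc1 unfolding C_def C1_def by blast
qed

lemma cokernel_postcomp_section_retraction:
  assumes q: "q \<in> hom A M Q" and s: "s \<in> hom A Q M" and qs: "q \<cdot> s = c_id A Q"
    and h: "h \<in> hom A Z Q"
    and c: "is_cokernel A c (s \<cdot> h)" and c1: "is_cokernel A c1 h" and ret: "is_retraction A c"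
  shows "is_retraction A c1"
proof -
  obtain u v where u: "u \<in> hom A (c_cod A c) (c_cod A c1)" and v: "v \<in> hom A (c_cod A c1) (c_cod A c)"
    and uc: "u \<cdot> c = c1 \<cdot> q" and uv: "u \<cdot> v = c_id A (c_cod A c1)"
    using cokernel_postcomp_section_compare[OF q s qs h c c1] by blast
  have ch: "c \<in> hom A M (c_cod A c)" and c1h: "c1 \<in> hom A Q (c_cod A c1)"
    using cokernel_hom[OF c comp_hom[OF h s]] cokernel_hom[OF c1 h] .
  obtain r where r: "r \<in> hom A (c_cod A c) M" and cr: "c \<cdot> r = c_id A (c_cod A c)"
    using retractionE[OF ret ch] .
  have rv: "r \<cdot> v \<in> hom A (c_cod A c1) M"
    using comp_hom[OF v r] .
  have "c1 \<cdot> (q \<cdot> (r \<cdot> v)) = u \<cdot> ((c \<cdot> r) \<cdot> v)"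
    using comp_assoc[OF rv q c1h] comp_assoc[OF v r ch] comp_assoc[OF rv ch u] uc by simp
  also have "\<dots> = c_id A (c_cod A c1)"
    using cr id_left[OF v] uv by simp
  finally show ?thesis
    using retractionI[OF c1h comp_hom[OF rv q]] by blast
qed

lemma cokernel_postcomp_section_fully_coinvariant:
  assumes q: "q \<in> hom A M Q" and s: "s \<in> hom A Q M" and qs: "q \<cdot> s = c_id A Q"
    and h: "h \<in> hom A Z Q"
    and c: "is_cokernel A c (s \<cdot> h)" and c1: "is_cokernel A c1 h" and fc: "fully_coinvariant A c"
  shows "fully_coinvariant A c1"
proof -
  obtain u v where u: "u \<in> hom A (c_cod A c) (c_cod A c1)" and v: "v \<in> hom A (c_cod A c1) (c_cod A c)"
    and uc: "u \<cdot> c = c1 \<cdot> q" and vc1: "v \<cdot> c1 = c \<cdot> s"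
    using cokernel_postcomp_section_compare[OF q s qs h c c1] by blast
  have ch: "c \<in> hom A M (c_cod A c)" and c1h: "c1 \<in> hom A Q (c_cod A c1)"
    using cokernel_hom[OF c comp_hom[OF h s]] cokernel_hom[OF c1 h] .
  have c1qs: "(c1 \<cdot> q) \<cdot> s = c1"
    using comp_assoc[OF s q c1h] qs id_right[OF c1h] by simp
  have "\<exists>\<beta> \<in> hom A (c_cod A c1) (c_cod A c1). c1 \<cdot> \<phi> = \<beta> \<cdot> c1" if \<phi>: "\<phi> \<in> hom A Q Q" for \<phi>
  proof -
    define \<psi> where "\<psi> = (s \<cdot> \<phi>) \<cdot> q"
    have s\<phi>: "s \<cdot> \<phi> \<in> hom A Q M"
      using comp_hom[OF \<phi> s] .
    have \<psi>: "\<psi> \<in> hom A M M"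
      unfolding \<psi>_def using comp_hom[OF q s\<phi>] .
    obtain \<beta> where \<beta>: "\<beta> \<in> hom A (c_cod A c) (c_cod A c)" and c\<beta>: "c \<cdot> \<psi> = \<beta> \<cdot> c"
      using fully_coinvariantE[OF fc ch \<psi>] .
    have c1q\<psi>: "(c1 \<cdot> q) \<cdot> (\<psi> \<cdot> s) = c1 \<cdot> \<phi>"
      unfolding \<psi>_def
      using comp_assoc[OF s q s\<phi>] comp_assoc[OF \<phi> s comp_hom[OF q c1h]] qs id_right[OF s\<phi>] c1qs
      by simp
    have "(u \<cdot> (\<beta> \<cdot> v)) \<cdot> c1 = (u \<cdot> (\<beta> \<cdot> c)) \<cdot> s"
      using comp_assoc[OF c1h v comp_hom[OF \<beta> u]] comp_assoc[OF v \<beta> u] comp_assoc[OF s ch comp_hom[OF \<beta> u]]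
        comp_assoc[OF ch \<beta> u] vc1 by simp
    also have "\<dots> = (c1 \<cdot> q) \<cdot> (\<psi> \<cdot> s)"
      using c\<beta> comp_assoc[OF \<psi> ch u] comp_assoc[OF s \<psi> comp_hom[OF ch u]] uc by simp
    also have "\<dots> = c1 \<cdot> \<phi>"
      by (rule c1q\<psi>)
    finally show ?thesis
      using comp_hom[OF comp_hom[OF v \<beta>] u] by metis
  qed
  then show ?thesis
    using fully_coinvariantI[OF cokernel_epi[OF c1] c1h] by blast
qed

end

section \<open>Abelian categories\<close>

locale abelian_category = preadditive +
  assumes abelian: "abelian A"
begin

lemma zero_object_exists:
  obtains Z where "Z \<in> c_ob A" "c_id A Z = \<zero> Z Z"
  using abelian unfolding abelian_def by (elim conjE) blast

lemma kernel_exists: "f \<in> c_ar A \<Longrightarrow> \<exists>k. is_kernel A k f"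
  using abelian unfolding abelian_def by (elim conjE) blast

lemma cokernel_exists: "f \<in> c_ar A \<Longrightarrow> \<exists>c. is_cokernel A c f"
  using abelian unfolding abelian_def by (elim conjE) blast

lemma mono_is_kernel: "is_mono A m \<Longrightarrow> \<exists>f. is_kernel A m f"
  using abelian unfolding abelian_def by (elim conjE) blast

lemma epi_is_cokernel: "is_epi A e \<Longrightarrow> \<exists>f. is_cokernel A e f"
  using abelian unfolding abelian_def by (elim conjE) blast

lemma mono_kernel_of_cokernel:
  assumes m: "is_mono A m" and c: "is_cokernel A c m"
  shows "is_kernel A m c"
proof -
  obtain f where k: "is_kernel A m f"
    using mono_is_kernel[OF m] by blast
  have f: "f \<in> hom A (c_dom A f) (c_cod A f)"
    using ar_hom[OF kernel_arrow[OF k]] .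
  have mh: "m \<in> hom A (c_dom A m) (c_dom A f)"
    using kernel_hom[OF k f] .
  have ch: "c \<in> hom A (c_dom A f) (c_cod A c)"
    using cokernel_hom[OF c mh] .
  obtain w where w: "w \<in> hom A (c_cod A c) (c_cod A f)" and fwc: "f = w \<cdot> c"
    using cokernel_annihilates_iff[OF c, of f "c_cod A f"] f mh kernel_comp_zero[OF k] by (auto simp: hom_iff)
  show ?thesis
  proof (rule kernel_of_same_annihilators[OF k f ch])
    fix Z y
    assume y: "y \<in> hom A Z (c_dom A f)"
    show "f \<cdot> y = \<zero> Z (c_cod A f) \<longleftrightarrow> c \<cdot> y = \<zero> Z (c_cod A c)"
    proof
      assume "f \<cdot> y = \<zero> Z (c_cod A f)"
      then obtain u where u: "u \<in> hom A Z (c_dom A m)" and "y = m \<cdot> u"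
        using kernel_annihilates_iff[OF k y] by blast
      then show "c \<cdot> y = \<zero> Z (c_cod A c)"
        using comp_assoc[OF u mh ch] cokernel_comp_zero[OF c] zero_comp[OF u] hom_ob[OF ch] mh
        by (simp add: hom_iff)
    next
      assume "c \<cdot> y = \<zero> Z (c_cod A c)"
      then show "f \<cdot> y = \<zero> Z (c_cod A f)"
        using fwc comp_assoc[OF y ch w] comp_zero[OF w] hom_ob[OF y] by simp
    qed
  qed
qed

lemma epi_cokernel_of_kernel:
  assumes e: "is_epi A e" and k: "is_kernel A k e"
  shows "is_cokernel A e k"
proof -
  obtain f where c: "is_cokernel A e f"
    using epi_is_cokernel[OF e] by blast
  have f: "f \<in> hom A (c_dom A f) (c_cod A f)"
    using ar_hom[OF cokernel_arrow[OF c]] .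
  have eh: "e \<in> hom A (c_cod A f) (c_cod A e)"
    using cokernel_hom[OF c f] .
  have kh: "k \<in> hom A (c_dom A k) (c_cod A f)"
    using kernel_hom[OF k eh] .
  obtain u where u: "u \<in> hom A (c_dom A f) (c_dom A k)" and fku: "f = k \<cdot> u"
    using kernel_annihilates_iff[OF k, of f "c_dom A f"] f eh cokernel_comp_zero[OF c] by (auto simp: hom_iff)
  show ?thesis
  proof (rule cokernel_of_same_annihilators[OF c f kh])
    fix Z y
    assume y: "y \<in> hom A (c_cod A f) Z"
    show "y \<cdot> f = \<zero> (c_dom A f) Z \<longleftrightarrow> y \<cdot> k = \<zero> (c_dom A k) Z"
    proof
      assume "y \<cdot> f = \<zero> (c_dom A f) Z"
      then obtain w where w: "w \<in> hom A (c_cod A e) Z" and "y = w \<cdot> e"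
        using cokernel_annihilates_iff[OF c y] by blast
      then show "y \<cdot> k = \<zero> (c_dom A k) Z"
        using comp_assoc[OF kh eh w] kernel_comp_zero[OF k] comp_zero[OF w] hom_ob[OF kh] eh
        by (simp add: hom_iff)
    next
      assume "y \<cdot> k = \<zero> (c_dom A k) Z"
      then show "y \<cdot> f = \<zero> (c_dom A f) Z"
        using fku comp_assoc[OF u kh y] zero_comp[OF u] hom_ob[OF y] by simp
    qed
  qed
qed

lemma cokernel_of_pullback_annihilates_iff:
  assumes se: "short_exact A i d" and pb: "is_pullback A j' j i e" and d1: "is_cokernel A d1 j"
    and y: "y \<in> hom A X (c_dom A e)"
  shows "d1 \<cdot> y = \<zero> X (c_cod A d1) \<longleftrightarrow> d \<cdot> (e \<cdot> y) = \<zero> X (c_cod A d)"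
proof -
  note H = pullback_homs[OF pb]
  have i: "is_kernel A i d"
    using se unfolding short_exact_def by blast
  have j: "is_kernel A j d1"
    using mono_kernel_of_cokernel[OF pullback_mono[OF pb kernel_mono[OF i]] d1] .
  have ey: "e \<cdot> y \<in> hom A X (c_dom A d)"
    using comp_hom[OF y H(4)] i by (simp add: is_kernel_def)
  have dj: "c_dom A j = c_dom A j'" and dd1: "c_dom A d1 = c_dom A e"
    using H(2) d1 by (simp_all add: is_cokernel_def hom_iff)
  have "d1 \<cdot> y = \<zero> X (c_cod A d1) \<longleftrightarrow> (\<exists>u \<in> hom A X (c_dom A j'). y = j \<cdot> u)"
    using kernel_annihilates_iff[OF j, of y X] y dd1 dj by simp
  also have "\<dots> \<longleftrightarrow> (\<exists>w \<in> hom A X (c_dom A i). e \<cdot> y = i \<cdot> w)"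
  proof
    assume "\<exists>u \<in> hom A X (c_dom A j'). y = j \<cdot> u"
    then obtain u where u: "u \<in> hom A X (c_dom A j')" and "y = j \<cdot> u" ..
    then have "e \<cdot> y = i \<cdot> (j' \<cdot> u)"
      using comp_assoc[OF u H(1,3)] comp_assoc[OF u H(2,4)] H(5) by simp
    then show "\<exists>w \<in> hom A X (c_dom A i). e \<cdot> y = i \<cdot> w"
      using comp_hom[OF u H(1)] by blast
  next
    assume "\<exists>w \<in> hom A X (c_dom A i). e \<cdot> y = i \<cdot> w"
    then obtain w where w: "w \<in> hom A X (c_dom A i)" and "e \<cdot> y = i \<cdot> w" ..
    then show "\<exists>u \<in> hom A X (c_dom A j'). y = j \<cdot> u"
      using pullback_universal[OF pb w y] by metis
  qed
  also have "\<dots> \<longleftrightarrow> d \<cdot> (e \<cdot> y) = \<zero> X (c_cod A d)"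
    using kernel_annihilates_iff[OF i ey] by metis
  finally show ?thesis .
qed

lemma annihilates_image_iff:
  assumes c: "is_cokernel A c f" and k: "is_kernel A k c" and y: "y \<in> hom A (c_cod A f) Z"
  shows "y \<cdot> k = \<zero> (c_dom A k) Z \<longleftrightarrow> y \<cdot> f = \<zero> (c_dom A f) Z"
proof -
  have "is_cokernel A c k"
    using epi_cokernel_of_kernel[OF cokernel_epi[OF c] k] .
  moreover have "c_cod A k = c_cod A f"
    using c k by (simp add: is_cokernel_def is_kernel_def)
  ultimately show ?thesis
    using cokernel_annihilates_iff[OF c y] cokernel_annihilates_iff[of c k y Z] y by simp
qed

lemma kernel_through_pullback:
  assumes se: "short_exact A i d" and pb: "is_pullback A j' j i e" and d1: "is_cokernel A d1 j"
    and g1: "g1 \<in> hom A M1 (c_dom A e)" and k1: "is_kernel A k1 (d1 \<cdot> g1)"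
  shows "is_kernel A k1 ((d \<cdot> e) \<cdot> g1)"
proof -
  note H = pullback_homs[OF pb]
  have dh: "d \<in> hom A (c_cod A i) (c_cod A d)"
    using se by (simp add: short_exact_def is_kernel_def hom_iff)
  have d1h: "d1 \<in> hom A (c_dom A e) (c_cod A d1)"
    using cokernel_hom[OF d1 H(2)] .
  have de: "d \<cdot> e \<in> hom A (c_dom A e) (c_cod A d)"
    using comp_hom[OF H(4) dh] .
  show ?thesis
  proof (rule kernel_of_same_annihilators[OF k1 comp_hom[OF g1 d1h] comp_hom[OF g1 de]])
    fix Z y
    assume y: "y \<in> hom A Z M1"
    show "(d1 \<cdot> g1) \<cdot> y = \<zero> Z (c_cod A d1) \<longleftrightarrow> ((d \<cdot> e) \<cdot> g1) \<cdot> y = \<zero> Z (c_cod A d)"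
      using cokernel_of_pullback_annihilates_iff[OF se pb d1 comp_hom[OF y g1]]
        comp_assoc[OF y g1 d1h] comp_assoc[OF y g1 de] comp_assoc[OF comp_hom[OF y g1] H(4) dh]
      by simp
  qed
qed

lemma cokernel_through_image:
  assumes d': "is_cokernel A d' f" and i': "is_kernel A i' d'"
    and g': "g' \<in> hom A (c_cod A f) X" and c: "is_cokernel A c (g' \<cdot> i')"
  shows "is_cokernel A c (g' \<cdot> f)"
proof -
  have f: "f \<in> hom A (c_dom A f) (c_cod A f)"
    using ar_hom[OF cokernel_arrow[OF d']] .
  have i'h: "i' \<in> hom A (c_dom A i') (c_cod A f)"
    using kernel_hom[OF i' cokernel_hom[OF d' f]] .
  show ?thesis
  proof (rule cokernel_of_same_annihilators[OF c comp_hom[OF i'h g'] comp_hom[OF f g']])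
    fix Z y
    assume y: "y \<in> hom A X Z"
    show "y \<cdot> (g' \<cdot> i') = \<zero> (c_dom A i') Z \<longleftrightarrow> y \<cdot> (g' \<cdot> f) = \<zero> (c_dom A f) Z"
      using annihilates_image_iff[OF d' i' comp_hom[OF g' y]] comp_assoc[OF i'h g' y] comp_assoc[OF f g' y]
      by simp
  qed
qed

subsection \<open>Passing to summands and quotients\<close>

lemma summand_kernel_transfer:
  assumes se: "short_exact A i d" and s: "s \<in> hom A M1 M" and sec: "is_section A s"
    and pb: "is_pullback A j' j i e" and d1: "is_cokernel A d1 j"
    and g1: "g1 \<in> hom A M1 (c_dom A d1)" and k1: "is_kernel A k1 (d1 \<cdot> g1)"
  obtains g k where "g \<in> hom A M (c_dom A d)" "is_kernel A k (d \<cdot> g)"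
    "is_section A k \<Longrightarrow> is_section A k1" "fully_invariant A k \<Longrightarrow> fully_invariant A k1"
proof -
  note H = pullback_homs[OF pb]
  have i: "is_kernel A i d"
    using se unfolding short_exact_def by blast
  have dh: "d \<in> hom A (c_dom A d) (c_cod A d)" and cid: "c_cod A i = c_dom A d"
    using ar_hom[OF kernel_arrow[OF i]] i by (simp_all add: is_kernel_def)
  have g1': "g1 \<in> hom A M1 (c_dom A e)"
    using g1 cokernel_hom[OF d1 H(2)] by (simp add: hom_iff)
  obtain t where t: "t \<in> hom A M M1" and ts: "t \<cdot> s = c_id A M1"
    using sectionE[OF sec s] .
  define h where "h = (d \<cdot> e) \<cdot> g1"
  have h: "h \<in> hom A M1 (c_cod A d)"
    unfolding h_def using comp_hom[OF g1' comp_hom[OF H(4)]] dh cid by simp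
  have k1h: "is_kernel A k1 h"
    unfolding h_def using kernel_through_pullback[OF se pb d1 g1' k1] .
  define g where "g = e \<cdot> (g1 \<cdot> t)"
  have g: "g \<in> hom A M (c_dom A d)"
    unfolding g_def using comp_hom[OF comp_hom[OF t g1'] H(4)] cid by simp
  then have "d \<cdot> g \<in> c_ar A"
    using comp_hom[OF g dh] by (simp add: hom_iff)
  then obtain k where k: "is_kernel A k (d \<cdot> g)"
    using kernel_exists by blast
  have "d \<cdot> g = h \<cdot> t"
    unfolding g_def h_def
    using comp_assoc[OF comp_hom[OF t g1'] H(4)] comp_assoc[OF t g1' comp_hom[OF H(4)]] dh cid by simp
  then have kh: "is_kernel A k (h \<cdot> t)"
    using k by simp
  show ?thesis
    using that[OF g k] kernel_precomp_retraction_section[OF s t ts h kh k1h]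
      kernel_precomp_retraction_fully_invariant[OF s t ts h kh k1h] by blast
qed

lemma quotient_cokernel_transfer:
  assumes i: "i \<in> hom A F N" and s: "s \<in> hom A M1 M" and sec: "is_section A s"
    and qM: "is_cokernel A qM s" and e: "e \<in> hom A N1 N" and q: "is_cokernel A q e"
    and d': "is_cokernel A d' (q \<cdot> i)" and i': "is_kernel A i' d'"
    and g': "g' \<in> hom A (c_cod A i') (c_cod A qM)" and c: "is_cokernel A c (g' \<cdot> i')"
  obtains g c0 where "g \<in> hom A N M" "is_cokernel A c0 (g \<cdot> i)"
    "is_retraction A c0 \<Longrightarrow> is_retraction A c" "fully_coinvariant A c0 \<Longrightarrow> fully_coinvariant A c"
proof -
  obtain r where r: "r \<in> hom A (c_cod A qM) M" and qMr: "qM \<cdot> r = c_id A (c_cod A qM)"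
    using cokernel_of_section_splits[OF s sec qM] .
  have qMh: "qM \<in> hom A M (c_cod A qM)"
    using cokernel_hom[OF qM s] .
  have qh: "q \<in> hom A N (c_cod A q)"
    using cokernel_hom[OF q e] .
  have qi: "q \<cdot> i \<in> hom A F (c_cod A q)"
    using comp_hom[OF i qh] .
  have g'': "g' \<in> hom A (c_cod A q) (c_cod A qM)"
    using g' kernel_hom[OF i' cokernel_hom[OF d' qi]] by (simp add: hom_iff)
  define h where "h = g' \<cdot> (q \<cdot> i)"
  have h: "h \<in> hom A F (c_cod A qM)"
    unfolding h_def using comp_hom[OF qi g''] .
  have ch: "is_cokernel A c h"
    unfolding h_def using cokernel_through_image[OF d' i'] g'' c qi by (simp add: hom_iff)
  define g where "g = r \<cdot> (g' \<cdot> q)"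
  have g: "g \<in> hom A N M"
    unfolding g_def using comp_hom[OF comp_hom[OF qh g''] r] .
  have "g \<cdot> i \<in> c_ar A"
    using comp_hom[OF i g] by (simp add: hom_iff)
  then obtain c0 where c0: "is_cokernel A c0 (g \<cdot> i)"
    using cokernel_exists by blast
  have "g \<cdot> i = r \<cdot> h"
    unfolding g_def h_def using comp_assoc[OF i comp_hom[OF qh g''] r] comp_assoc[OF i qh g''] by simp
  then have c0h: "is_cokernel A c0 (r \<cdot> h)"
    using c0 by simp
  show ?thesis
    using that[OF g c0] cokernel_postcomp_section_retraction[OF qMh r qMr h c0h ch]
      cokernel_postcomp_section_fully_coinvariant[OF qMh r qMr h c0h ch] by blast
qed

lemma summand_cond_if_MF_split:
  assumes se: "short_exact A i d" and split: "MF_split A M i d"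
  shows "summand_cond MF_split A M i d"
  unfolding summand_cond_def MF_split_def
proof (intro allI impI ballI)
  fix M1 s N1 e j' j d1 g1 k1
  assume s: "s \<in> hom A M1 M" and sec: "is_section A s" and "e \<in> hom A N1 (c_cod A i)"
    and "is_section A e" and pb: "is_pullback A j' j i e" and d1: "is_cokernel A d1 j"
    and g1: "g1 \<in> hom A M1 (c_dom A d1)" and k1: "is_kernel A k1 (d1 \<cdot> g1)"
  obtain g k where "g \<in> hom A M (c_dom A d)" "is_kernel A k (d \<cdot> g)"
    and "is_section A k \<Longrightarrow> is_section A k1"
    using summand_kernel_transfer[OF se s sec pb d1 g1 k1] by blast
  then show "is_section A k1"
    using split unfolding MF_split_def by blast
qed

lemma summand_cond_if_strongly_MF_split:
  assumes se: "short_exact A i d" and split: "strongly_MF_split A M i d"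
  shows "summand_cond strongly_MF_split A M i d"
  unfolding summand_cond_def strongly_MF_split_def
proof (intro allI impI ballI)
  fix M1 s N1 e j' j d1 g1 k1
  assume s: "s \<in> hom A M1 M" and sec: "is_section A s" and "e \<in> hom A N1 (c_cod A i)"
    and "is_section A e" and pb: "is_pullback A j' j i e" and d1: "is_cokernel A d1 j"
    and g1: "g1 \<in> hom A M1 (c_dom A d1)" and k1: "is_kernel A k1 (d1 \<cdot> g1)"
  obtain g k where "g \<in> hom A M (c_dom A d)" "is_kernel A k (d \<cdot> g)"
    and "is_section A k \<Longrightarrow> is_section A k1" "fully_invariant A k \<Longrightarrow> fully_invariant A k1"
    using summand_kernel_transfer[OF se s sec pb d1 g1 k1] by blast
  then show "is_section A k1 \<and> fully_invariant A k1"
    using split unfolding strongly_MF_split_def by blast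
qed

lemma quotient_cond_if_dual_MF_split:
  assumes i: "i \<in> hom A F N" and split: "dual_MF_split A M i d"
  shows "quotient_cond dual_MF_split A M i d"
  unfolding quotient_cond_def dual_MF_split_def
proof (intro allI impI ballI)
  fix M1 s qM N1 e q d' i' g' c
  assume s: "s \<in> hom A M1 M" and sec: "is_section A s" and qM: "is_cokernel A qM s"
    and e: "e \<in> hom A N1 (c_cod A i)" and "is_section A e" and q: "is_cokernel A q e"
    and d': "is_cokernel A d' (q \<cdot> i)" and i': "is_kernel A i' d'"
    and g': "g' \<in> hom A (c_cod A i') (c_cod A qM)" and c: "is_cokernel A c (g' \<cdot> i')"
  have e': "e \<in> hom A N1 N"
    using e i by (simp add: hom_iff)
  obtain g c0 where "g \<in> hom A N M" "is_cokernel A c0 (g \<cdot> i)"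
    and "is_retraction A c0 \<Longrightarrow> is_retraction A c"
    using quotient_cokernel_transfer[OF i s sec qM e' q d' i' g' c] by blast
  then show "is_retraction A c"
    using split i unfolding dual_MF_split_def by (auto simp: hom_iff)
qed

lemma quotient_cond_if_dual_strongly_MF_split:
  assumes i: "i \<in> hom A F N" and split: "dual_strongly_MF_split A M i d"
  shows "quotient_cond dual_strongly_MF_split A M i d"
  unfolding quotient_cond_def dual_strongly_MF_split_def
proof (intro allI impI ballI)
  fix M1 s qM N1 e q d' i' g' c
  assume s: "s \<in> hom A M1 M" and sec: "is_section A s" and qM: "is_cokernel A qM s"
    and e: "e \<in> hom A N1 (c_cod A i)" and "is_section A e" and q: "is_cokernel A q e"
    and d': "is_cokernel A d' (q \<cdot> i)" and i': "is_kernel A i' d'"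
    and g': "g' \<in> hom A (c_cod A i') (c_cod A qM)" and c: "is_cokernel A c (g' \<cdot> i')"
  have e': "e \<in> hom A N1 N"
    using e i by (simp add: hom_iff)
  obtain g c0 where "g \<in> hom A N M" "is_cokernel A c0 (g \<cdot> i)"
    and "is_retraction A c0 \<Longrightarrow> is_retraction A c" "fully_coinvariant A c0 \<Longrightarrow> fully_coinvariant A c"
    using quotient_cokernel_transfer[OF i s sec qM e' q d' i' g' c] by blast
  then show "is_retraction A c \<and> fully_coinvariant A c"
    using split i unfolding dual_strongly_MF_split_def by (auto simp: hom_iff)
qed

lemma split_if_summand_cond:
  assumes se: "short_exact A i d" and M: "M \<in> c_ob A" and cond: "summand_cond S A M i d"
  shows "S A M i d"
proof -
  have i: "i \<in> hom A (c_dom A i) (c_cod A i)" and d: "is_cokernel A d i"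
    using se unfolding short_exact_def is_kernel_def hom_iff by blast+
  have N: "c_cod A i \<in> c_ob A"
    using hom_ob[OF i] by blast
  show ?thesis
    using cond[unfolded summand_cond_def, rule_format, of "c_id A M" M "c_id A (c_cod A i)" "c_cod A i"
        "c_id A (c_dom A i)" i d]
      id_hom[OF M] id_hom[OF N] id_section[OF M] id_section[OF N] id_pullback[OF i] d
    by blast
qed

lemma dual_split_if_quotient_cond:
  assumes se: "short_exact A i d" and M: "M \<in> c_ob A" and cond: "quotient_cond S A M i d"
  shows "S A M i d"
proof -
  have i: "i \<in> hom A (c_dom A i) (c_cod A i)" and d: "is_cokernel A d i" and k: "is_kernel A i d"
    using se unfolding short_exact_def is_kernel_def hom_iff by blast+
  have N: "c_cod A i \<in> c_ob A"
    using hom_ob[OF i] by blast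
  obtain Z where Z: "Z \<in> c_ob A" "c_id A Z = \<zero> Z Z"
    using zero_object_exists .
  have "S A (c_cod A (c_id A M)) i d"
    using cond[unfolded quotient_cond_def, rule_format, of "\<zero> Z M" Z "c_id A M" "\<zero> Z (c_cod A i)" Z
        "c_id A (c_cod A i)" d i]
      zero_hom[OF Z(1) M] zero_hom[OF Z(1) N] zero_section[OF Z M] zero_section[OF Z N]
      id_cokernel_of_zero[OF Z(1) M] id_cokernel_of_zero[OF Z(1) N] id_left[OF i] d k
    by simp
  then show ?thesis
    using id_hom[OF M] by (simp add: hom_iff)
qed

end

theorem corollary3p9:
  fixes A :: "('o, 'm) acat" and M :: 'o and i d :: 'm
  assumes "abelian A" and "M \<in> c_ob A" and "fi_short_exact A i d"
  shows "(MF_split A M i d \<longleftrightarrow> summand_cond MF_split A M i d) \<and>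
         (strongly_MF_split A M i d \<longleftrightarrow> summand_cond strongly_MF_split A M i d) \<and>
         (dual_MF_split A M i d \<longleftrightarrow> quotient_cond dual_MF_split A M i d) \<and>
         (dual_strongly_MF_split A M i d \<longleftrightarrow> quotient_cond dual_strongly_MF_split A M i d)"
proof -
  interpret abelian_category A
    using assms(1) by unfold_locales (simp_all add: abelian_def)
  have se: "short_exact A i d"
    using assms(3) unfolding fi_short_exact_def by blast
  then have i: "i \<in> hom A (c_dom A i) (c_cod A i)"
    unfolding short_exact_def is_kernel_def hom_iff by blast
  show ?thesis
    using summand_cond_if_MF_split[OF se] summand_cond_if_strongly_MF_split[OF se]
      quotient_cond_if_dual_MF_split[OF i] quotient_cond_if_dual_strongly_MF_split[OF i]
      split_if_summand_cond[OF se assms(2)] dual_split_if_quotient_cond[OF se assms(2)]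
    by blast
qed

end
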